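(* Let $n\ge 3$ and $m\ge 3$, let $C_n$ be a cycle on $n$ vertices and $P_m$ a path on $m$ vertices, and let $H$ be the graph obtained by identifying one vertex of $C_n$ with an endpoint of $P_m$ (a $1$-clique sum of $C_n$ and $P_m$). Then $$v(C_n)+v(P_{m-2})-1\le v(H)\le v(C_n)+v(P_{m-2}).$$
   Context: Let $K$ be a field and $S$ a standard graded polynomial ring over $K$. For a proper graded ideal $I\subset S$, the $v$-number is $v(I)=\min\{k\ge 0 : \exists f\in S_k,\ \mathcal P\in\operatorname{Ass}(S/I) \text{ with } (I:f)=\mathcal P\}$. For a finite simple graph $G$ whose vertices are variables of a polynomial ring, $I(G)$ is the edge ideal generated by $x_ix_j$ over edges $\{x_i,x_j\}$, and $v(G):=v(I(G))$. $P_k$ denotes the path on $k$ vertices (vertices $y_1,\dots,y_k$, edges $\{y_i,y_{i+1}\}$) and $C_n$ the cycle on $n$ vertices. A $1$-clique sum of graphs $G_1,G_2$ is $G_1\cup G_2$ where $G_1\cap G_2$ is a single vertex and neither $G_i$ is a single vertex. *)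

theory Defs
  imports "HOL-Library.Poly_Mapping"
begin

text \<open>Polynomials over a field 'k in variables indexed by naturals, represented as
finitely supported maps from monomials (exponent vectors) to coefficients.
For a finite vertex set V we work in the polynomial ring S = K[x_i : i \<in> V],
realised as the subring of polynomials whose variables all lie in V.\<close>

type_synonym 'k mpoly = "(nat \<Rightarrow>\<^sub>0 nat) \<Rightarrow>\<^sub>0 'k"

definition polyring :: "nat set \<Rightarrow> 'k::field mpoly set" where
  "polyring V = {p :: 'k mpoly. \<forall>m \<in> Poly_Mapping.keys p. Poly_Mapping.keys m \<subseteq> V}"

definition var :: "nat \<Rightarrow> 'k::field mpoly" where
  "var i = Poly_Mapping.single (Poly_Mapping.single i 1) 1"

definition mdeg :: "(nat \<Rightarrow>\<^sub>0 nat) \<Rightarrow> nat" where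
  "mdeg m = (\<Sum>i \<in> Poly_Mapping.keys m. Poly_Mapping.lookup m i)"

definition homog :: "nat set \<Rightarrow> nat \<Rightarrow> 'k::field mpoly \<Rightarrow> bool" where
  "homog V k f \<longleftrightarrow> f \<in> polyring V \<and> (\<forall>m \<in> Poly_Mapping.keys f. mdeg m = k)"

definition gen_ideal :: "nat set \<Rightarrow> 'k::field mpoly set \<Rightarrow> 'k mpoly set" where
  "gen_ideal V Gs = {(\<Sum>g\<in>F. c g * g) | F c. finite F \<and> F \<subseteq> Gs \<and> (\<forall>g\<in>F. c g \<in> polyring V)}"

definition is_ideal :: "nat set \<Rightarrow> 'k::field mpoly set \<Rightarrow> bool" where
  "is_ideal V I \<longleftrightarrow> I \<subseteq> polyring V \<and> 0 \<in> I \<and> (\<forall>a\<in>I. \<forall>b\<in>I. a + b \<in> I)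
     \<and> (\<forall>r\<in>polyring V. \<forall>a\<in>I. r * a \<in> I)"

definition prime_ideal :: "nat set \<Rightarrow> 'k::field mpoly set \<Rightarrow> bool" where
  "prime_ideal V P \<longleftrightarrow> is_ideal V P \<and> P \<noteq> polyring V
     \<and> (\<forall>a\<in>polyring V. \<forall>b\<in>polyring V. a * b \<in> P \<longrightarrow> a \<in> P \<or> b \<in> P)"

definition colon :: "nat set \<Rightarrow> 'k::field mpoly set \<Rightarrow> 'k mpoly \<Rightarrow> 'k mpoly set" where
  "colon V I f = {g \<in> polyring V. g * f \<in> I}"

definition ass :: "nat set \<Rightarrow> 'k::field mpoly set \<Rightarrow> 'k mpoly set set" where
  "ass V I = {P. prime_ideal V P \<and> (\<exists>g \<in> polyring V. colon V I g = P)}"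

definition v_number :: "nat set \<Rightarrow> 'k::field mpoly set \<Rightarrow> nat" where
  "v_number V I = (LEAST k. \<exists>f P. homog V k f \<and> P \<in> ass V I \<and> colon V I f = P)"

definition edge_ideal :: "nat set \<Rightarrow> nat set set \<Rightarrow> 'k::field mpoly set" where
  "edge_ideal V E = gen_ideal V {var i * var j | i j. {i, j} \<in> E}"

definition v_graph :: "'k::field itself \<Rightarrow> nat set \<Rightarrow> nat set set \<Rightarrow> nat" where
  "v_graph TYPE('k) V E = v_number V (edge_ideal V E :: 'k mpoly set)"

definition path_V :: "nat \<Rightarrow> nat set" where "path_V k = {1..k}"
definition path_E :: "nat \<Rightarrow> nat set set" where
  "path_E k = {{i, i + 1} | i. 1 \<le> i \<and> i < k}"
definition cycle_V :: "nat \<Rightarrow> nat set" where "cycle_V n = {1..n}"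
definition cycle_E :: "nat \<Rightarrow> nat set set" where
  "cycle_E n = {{i, i + 1} | i. 1 \<le> i \<and> i < n} \<union> {{n, 1}}"

text \<open>H = 1-clique sum of C_n (vertices 1..n) and P_m (vertices n..n+m-1),
glued at the cycle vertex n, which is an endpoint of the path.\<close>
definition cp_V :: "nat \<Rightarrow> nat \<Rightarrow> nat set" where "cp_V n m = {1..n + m - 1}"
definition cp_E :: "nat \<Rightarrow> nat \<Rightarrow> nat set set" where
  "cp_E n m = cycle_E n \<union> {{i, i + 1} | i. n \<le> i \<and> i < n + m - 1}"

end

theory Submission
  imports Defs
begin

text \<open>By the description of Jaramillo and Villarreal, \<open>v(G)\<close> is the least size of an independent
  set \<open>A\<close> whose neighbourhood \<open>N(A)\<close> is a vertex cover: for such \<open>A\<close> the colon ideal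
  \<open>(I(G) : x\<^sup>A)\<close> is the prime generated by the variables of \<open>N(A)\<close>, and conversely a term of
  \<open>f\<close> with \<open>(I(G) : f)\<close> prime yields such a set of size at most \<open>deg f\<close>.

  The clique sum \<open>H\<close> is \<open>C\<^sub>n\<close> and a copy of \<open>P\<^sub>m\<^sub>-\<^sub>2\<close> joined through the new vertex \<open>n + 1\<close>.
  Optimal witnesses of the two parts, the one of the cycle rotated to contain \<open>n\<close>, together
  witness \<open>H\<close>. Conversely a witness of \<open>H\<close> restricts to both parts; only when it contains
  \<open>n + 1\<close> can an edge at an attachment vertex be left uncovered, and adding that vertex
  repairs it, which costs at most two vertices while \<open>n + 1\<close> itself is dropped.\<close>

section \<open>Independent sets whose neighbourhood covers all edges\<close>

definition independent :: "'a set set \<Rightarrow> 'a set \<Rightarrow> bool" where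
  "independent E A \<longleftrightarrow> (\<forall>x\<in>A. \<forall>y\<in>A. {x, y} \<notin> E)"

definition neighbourhood :: "'a set set \<Rightarrow> 'a set \<Rightarrow> 'a set" where
  "neighbourhood E A = {x. \<exists>a\<in>A. {x, a} \<in> E}"

definition vertex_cover :: "'a set set \<Rightarrow> 'a set \<Rightarrow> bool" where
  "vertex_cover E C \<longleftrightarrow> (\<forall>x y. {x, y} \<in> E \<longrightarrow> x \<in> C \<or> y \<in> C)"

definition graph_on :: "'a set \<Rightarrow> 'a set set \<Rightarrow> bool" where
  "graph_on V E \<longleftrightarrow> (\<forall>e\<in>E. \<exists>x y. e = {x, y} \<and> x \<noteq> y \<and> x \<in> V \<and> y \<in> V)"

text \<open>For independent \<open>A\<close> the cover \<open>N(A)\<close> is automatically minimal: a vertex of \<open>N(A)\<close>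
  is the only end of its edge to \<open>A\<close> lying in \<open>N(A)\<close>. So \<open>v_comb\<close> is the combinatorial
  v-number of Jaramillo and Villarreal.\<close>

definition v_witness :: "'a set \<Rightarrow> 'a set set \<Rightarrow> 'a set \<Rightarrow> bool" where
  "v_witness V E A \<longleftrightarrow> A \<subseteq> V \<and> independent E A \<and> vertex_cover E (neighbourhood E A)"

definition v_comb :: "'a set \<Rightarrow> 'a set set \<Rightarrow> nat" where
  "v_comb V E = (LEAST k. \<exists>A. v_witness V E A \<and> card A = k)"

lemma graph_onD:
  assumes "graph_on V E" "{x, y} \<in> E"
  shows "x \<noteq> y" "x \<in> V" "y \<in> V"
  using assms unfolding graph_on_def by (metis doubleton_eq_iff)+

lemma neighbourhoodI: "a \<in> A \<Longrightarrow> {x, a} \<in> E \<Longrightarrow> x \<in> neighbourhood E A"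
  unfolding neighbourhood_def by blast

lemma neighbourhood_mono: "A \<subseteq> B \<Longrightarrow> E \<subseteq> E' \<Longrightarrow> neighbourhood E A \<subseteq> neighbourhood E' B"
  unfolding neighbourhood_def by blast

lemma not_independent_insert:
  assumes "graph_on V E" "independent E A" "\<not> independent E (insert z A)"
  shows "z \<in> neighbourhood E A"
proof -
  obtain x y where xy: "x \<in> insert z A" "y \<in> insert z A" "{x, y} \<in> E"
    using assms(3) unfolding independent_def by blast
  have "x \<noteq> y" using graph_onD(1)[OF assms(1) xy(3)] .
  moreover have "\<not> (x \<in> A \<and> y \<in> A)"
    using assms(2) xy(3) unfolding independent_def by blast
  ultimately show ?thesis
    using xy by (auto simp: insert_commute intro: neighbourhoodI)
qed

lemma not_independent_Un_iff:
  assumes "independent E A" "vertex_cover E (neighbourhood E A)"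
  shows "\<not> independent E (A \<union> S) \<longleftrightarrow> S \<inter> neighbourhood E A \<noteq> {}"
proof
  assume "\<not> independent E (A \<union> S)"
  then obtain x y where xy: "x \<in> A \<union> S" "y \<in> A \<union> S" "{x, y} \<in> E"
    unfolding independent_def by blast
  have "\<not> (x \<in> A \<and> y \<in> A)"
    using assms(1) xy(3) unfolding independent_def by blast
  moreover have "x \<in> neighbourhood E A" if "y \<in> A"
    using that xy(3) by (rule neighbourhoodI)
  moreover have "y \<in> neighbourhood E A" if "x \<in> A"
    using that xy(3) by (intro neighbourhoodI) (auto simp: insert_commute)
  moreover have "x \<in> neighbourhood E A \<or> y \<in> neighbourhood E A"
    using assms(2) xy(3) unfolding vertex_cover_def by blast
  ultimately show "S \<inter> neighbourhood E A \<noteq> {}"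
    using xy(1,2) by blast
next
  assume "S \<inter> neighbourhood E A \<noteq> {}"
  then obtain x a where "x \<in> S" "a \<in> A" "{x, a} \<in> E"
    unfolding neighbourhood_def by blast
  then show "\<not> independent E (A \<union> S)"
    unfolding independent_def by blast
qed

lemma v_comb_le: "v_witness V E A \<Longrightarrow> v_comb V E \<le> card A"
  unfolding v_comb_def by (rule Least_le) blast

lemma v_witness_exists:
  assumes "finite V" "graph_on V E"
  shows "\<exists>A. v_witness V E A"
proof -
  define S where "S = {A. A \<subseteq> V \<and> independent E A}"
  have "finite S" "{} \<in> S"
    using assms(1) by (auto simp: S_def independent_def)
  then obtain A where A: "A \<in> S" and maximal: "\<And>B. B \<in> S \<Longrightarrow> A \<subseteq> B \<Longrightarrow> A = B"
    using finite_has_maximal[of S] by blast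
  have "x \<in> neighbourhood E A" if "x \<in> V" "x \<notin> A" for x
  proof (rule not_independent_insert[OF assms(2)])
    show "independent E A" using A by (simp add: S_def)
    show "\<not> independent E (insert x A)"
      using maximal[of "insert x A"] A that by (auto simp: S_def)
  qed
  moreover have "\<not> (x \<in> A \<and> y \<in> A)" if "{x, y} \<in> E" for x y
    using A that by (auto simp: S_def independent_def)
  ultimately have "vertex_cover E (neighbourhood E A)"
    unfolding vertex_cover_def using graph_onD(2,3)[OF assms(2)] by blast
  then show ?thesis
    using A by (auto simp: v_witness_def S_def)
qed

lemma v_comb_obtain:
  assumes "finite V" "graph_on V E"
  obtains A where "v_witness V E A" "card A = v_comb V E"
proof -
  obtain A where "v_witness V E A"
    using v_witness_exists[OF assms] ..
  then show ?thesis
    using that LeastI_ex[of "\<lambda>k. \<exists>A. v_witness V E A \<and> card A = k"]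
    unfolding v_comb_def by blast
qed

lemma v_witness_nonempty: "v_witness V E A \<Longrightarrow> {x, y} \<in> E \<Longrightarrow> A \<noteq> {}"
  unfolding v_witness_def vertex_cover_def neighbourhood_def by blast

section \<open>Monomials and the edge ideal\<close>

abbreviation monom :: "(nat \<Rightarrow>\<^sub>0 nat) \<Rightarrow> 'k::field mpoly" where
  "monom t \<equiv> Poly_Mapping.single t 1"

lemma keys_add_nat:
  "Poly_Mapping.keys ((s :: nat \<Rightarrow>\<^sub>0 nat) + t) = Poly_Mapping.keys s \<union> Poly_Mapping.keys t"
  by (auto simp: in_keys_iff lookup_add)

lemma lookup_single_mult:
  fixes p :: "'k::field mpoly"
  shows "Poly_Mapping.lookup (Poly_Mapping.single t c * p) (t + s) = c * Poly_Mapping.lookup p s"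
proof -
  have "Poly_Mapping.lookup (Poly_Mapping.single t c * p) (t + s)
      = (\<Sum>l. (c when t = l) * (\<Sum>q. Poly_Mapping.lookup p q when t + s = l + q))"
    by (simp add: lookup_mult lookup_single)
  also have "\<dots> = c * (\<Sum>q. Poly_Mapping.lookup p q when t + s = t + q)"
    by (simp add: when_mult)
  finally show ?thesis
    by simp
qed

lemma keys_single_mult:
  fixes p :: "'k::field mpoly"
  assumes "c \<noteq> 0"
  shows "Poly_Mapping.keys (Poly_Mapping.single t c * p) = (+) t ` Poly_Mapping.keys p"
proof
  show "Poly_Mapping.keys (Poly_Mapping.single t c * p) \<subseteq> (+) t ` Poly_Mapping.keys p"
    using keys_mult[of "Poly_Mapping.single t c" p] assms by auto
  show "(+) t ` Poly_Mapping.keys p \<subseteq> Poly_Mapping.keys (Poly_Mapping.single t c * p)"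
    using assms by (auto simp: in_keys_iff lookup_single_mult)
qed

lemma sum_single_lookup:
  "(\<Sum>t\<in>Poly_Mapping.keys p. Poly_Mapping.single t (Poly_Mapping.lookup p t)) = p"
proof (rule poly_mapping_eqI)
  fix k
  have "Poly_Mapping.lookup (\<Sum>t\<in>Poly_Mapping.keys p. Poly_Mapping.single t (Poly_Mapping.lookup p t)) k
      = (\<Sum>t\<in>Poly_Mapping.keys p. Poly_Mapping.lookup p t when t = k)"
    by (simp add: lookup_sum lookup_single)
  also have "\<dots> = Poly_Mapping.lookup p k"
    by (simp add: when_def in_keys_iff)
  finally show "Poly_Mapping.lookup (\<Sum>t\<in>Poly_Mapping.keys p. Poly_Mapping.single t (Poly_Mapping.lookup p t)) k
      = Poly_Mapping.lookup p k" .
qed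

lemma poly_mapping_split_keys:
  fixes x :: "'a \<Rightarrow>\<^sub>0 'b::monoid_add"
  obtains x0 x1 where "x = x0 + x1" "Poly_Mapping.keys x0 = Poly_Mapping.keys x \<inter> Z"
    "Poly_Mapping.keys x1 = Poly_Mapping.keys x - Z"
proof
  let ?restrict = "\<lambda>Y. Poly_Mapping.mapp (\<lambda>t c. c when t \<in> Y) x"
  show "x = ?restrict Z + ?restrict (- Z)"
    by (rule poly_mapping_eqI) (simp add: lookup_add lookup_mapp when_def in_keys_iff)
  show "Poly_Mapping.keys (?restrict Z) = Poly_Mapping.keys x \<inter> Z"
    "Poly_Mapping.keys (?restrict (- Z)) = Poly_Mapping.keys x - Z"
    by (auto simp: in_keys_iff lookup_mapp)
qed

lemma polyring_add: "a \<in> polyring V \<Longrightarrow> b \<in> polyring V \<Longrightarrow> a + b \<in> polyring V"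
  using keys_add[of a b] by (auto simp: polyring_def)

lemma polyring_mult: "a \<in> polyring V \<Longrightarrow> b \<in> polyring V \<Longrightarrow> a * b \<in> polyring V"
  using keys_mult[of a b] by (fastforce simp: polyring_def keys_add_nat)

lemma polyring_single: "Poly_Mapping.keys t \<subseteq> V \<Longrightarrow> Poly_Mapping.single t c \<in> polyring V"
  by (simp add: polyring_def)

lemma polyring_zero [simp]: "0 \<in> polyring V"
  by (simp add: polyring_def)

lemma polyring_one [simp]: "1 \<in> polyring V"
  by (simp add: polyring_def)

lemma polyring_prod: "(\<And>x. x \<in> S \<Longrightarrow> h x \<in> polyring V) \<Longrightarrow> prod h S \<in> polyring V"
  by (induction S rule: infinite_finite_induct) (auto intro: polyring_mult)

lemma var_mult_var:
  "(var i * var j :: 'k::field mpoly) = monom (Poly_Mapping.single i 1 + Poly_Mapping.single j 1)"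
  by (simp add: var_def mult_single)

lemma gen_ideal_add:
  assumes "a \<in> gen_ideal V Gs" "b \<in> gen_ideal V Gs"
  shows "a + b \<in> gen_ideal V Gs"
proof -
  obtain F1 c1 where 1: "a = (\<Sum>g\<in>F1. c1 g * g)" "finite F1" "F1 \<subseteq> Gs" "\<forall>g\<in>F1. c1 g \<in> polyring V"
    using assms(1) unfolding gen_ideal_def by blast
  obtain F2 c2 where 2: "b = (\<Sum>g\<in>F2. c2 g * g)" "finite F2" "F2 \<subseteq> Gs" "\<forall>g\<in>F2. c2 g \<in> polyring V"
    using assms(2) unfolding gen_ideal_def by blast
  define c where "c g = (if g \<in> F1 then c1 g else 0) + (if g \<in> F2 then c2 g else 0)" for g
  have "c g * g = (if g \<in> F1 then c1 g * g else 0) + (if g \<in> F2 then c2 g * g else 0)" for g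
    by (simp add: c_def distrib_right)
  then have "(\<Sum>g\<in>F1 \<union> F2. c g * g)
      = (\<Sum>g\<in>F1 \<union> F2. if g \<in> F1 then c1 g * g else 0) + (\<Sum>g\<in>F1 \<union> F2. if g \<in> F2 then c2 g * g else 0)"
    by (simp add: sum.distrib)
  also have "\<dots> = a + b"
    using 1 2 by (simp add: sum.inter_restrict[symmetric] Int_absorb1)
  finally have "a + b = (\<Sum>g\<in>F1 \<union> F2. c g * g)" ..
  moreover have "\<forall>g\<in>F1 \<union> F2. c g \<in> polyring V"
    using 1 2 by (auto simp: c_def intro: polyring_add)
  ultimately show ?thesis
    using 1 2 unfolding gen_ideal_def by blast
qed

lemma gen_ideal_zero: "0 \<in> gen_ideal V Gs"
  unfolding gen_ideal_def by (rule CollectI, rule exI[of _ "{}"]) auto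

lemma gen_ideal_sum:
  "(\<And>x. x \<in> S \<Longrightarrow> f x \<in> gen_ideal V Gs) \<Longrightarrow> sum f S \<in> gen_ideal V Gs"
  by (induction S rule: infinite_finite_induct) (auto intro: gen_ideal_add gen_ideal_zero)

lemma gen_ideal_mult_gen: "g \<in> Gs \<Longrightarrow> r \<in> polyring V \<Longrightarrow> r * g \<in> gen_ideal V Gs"
  unfolding gen_ideal_def
  by (rule CollectI, rule exI[of _ "{g}"], rule exI[of _ "\<lambda>_. r"]) auto

lemma monomial_in_edge_ideal:
  assumes "{i, j} \<in> E" "i \<noteq> j" "{i, j} \<subseteq> Poly_Mapping.keys t" "Poly_Mapping.keys t \<subseteq> V"
  shows "(Poly_Mapping.single t c :: 'k::field mpoly) \<in> edge_ideal V E"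
proof -
  define e :: "nat \<Rightarrow>\<^sub>0 nat" where "e = Poly_Mapping.single i 1 + Poly_Mapping.single j 1"
  have le: "Poly_Mapping.lookup e k \<le> Poly_Mapping.lookup t k" for k
    using assms(2,3) by (auto simp: e_def lookup_add lookup_single when_def in_keys_iff)
  have t: "t = (t - e) + e"
    by (rule poly_mapping_eqI) (use le in \<open>simp add: lookup_add lookup_minus\<close>)
  have "Poly_Mapping.keys (t - e) \<subseteq> V"
    using le assms(4) by (auto simp: in_keys_iff lookup_minus)
  then have "Poly_Mapping.single (t - e) c * (var i * var j :: 'k mpoly) \<in> edge_ideal V E"
    unfolding edge_ideal_def using assms(1) by (intro gen_ideal_mult_gen polyring_single) auto
  then show ?thesis
    by (subst t) (simp add: var_mult_var mult_single e_def)
qed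

lemma edge_ideal_terms:
  assumes "graph_on V E" "(p :: 'k::field mpoly) \<in> edge_ideal V E"
  shows "p \<in> polyring V" "\<forall>t\<in>Poly_Mapping.keys p. \<not> independent E (Poly_Mapping.keys t)"
proof -
  define M where "M = {q :: 'k mpoly. q \<in> polyring V \<and>
    (\<forall>t\<in>Poly_Mapping.keys q. \<not> independent E (Poly_Mapping.keys t))}"
  have M_add: "a + b \<in> M" if "a \<in> M" "b \<in> M" for a b
    using that keys_add[of a b] by (auto simp: M_def intro: polyring_add)
  have "0 \<in> M"
    by (simp add: M_def)
  then have M_sum: "sum f F \<in> M" if "\<And>g. g \<in> F \<Longrightarrow> f g \<in> M" for f :: "'k mpoly \<Rightarrow> 'k mpoly" and F
    using that by (induction F rule: infinite_finite_induct) (auto intro: M_add)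
  obtain F c where F: "p = (\<Sum>g\<in>F. c g * g)" "F \<subseteq> {var i * var j | i j. {i, j} \<in> E}"
      "\<forall>g\<in>F. c g \<in> polyring V"
    using assms(2) unfolding edge_ideal_def gen_ideal_def by blast
  have "c g * g \<in> M" if "g \<in> F" for g
  proof -
    obtain i j where g: "g = var i * var j" "{i, j} \<in> E"
      using F(2) \<open>g \<in> F\<close> by blast
    define e :: "nat \<Rightarrow>\<^sub>0 nat" where "e = Poly_Mapping.single i 1 + Poly_Mapping.single j 1"
    have ij: "i \<in> V" "j \<in> V" "i \<noteq> j"
      using graph_onD[OF assms(1) g(2)] by auto
    have "Poly_Mapping.keys (c g * g) = (+) e ` Poly_Mapping.keys (c g)"
      by (simp add: g var_mult_var e_def mult.commute[of _ "monom _"] keys_single_mult)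
    moreover have "\<not> independent E (Poly_Mapping.keys (e + s))" for s
      using g(2) ij unfolding independent_def by (auto simp: e_def keys_add_nat)
    moreover have "c g * g \<in> polyring V"
      using F(3) \<open>g \<in> F\<close> ij
      by (auto simp: g var_mult_var keys_add_nat intro!: polyring_mult polyring_single)
    ultimately show ?thesis
      by (auto simp: M_def)
  qed
  then have "p \<in> M"
    unfolding F(1) by (rule M_sum)
  then show "p \<in> polyring V" "\<forall>t\<in>Poly_Mapping.keys p. \<not> independent E (Poly_Mapping.keys t)"
    by (simp_all add: M_def)
qed

lemma edge_ideal_iff:
  assumes "graph_on V E"
  shows "(p :: 'k::field mpoly) \<in> edge_ideal V E \<longleftrightarrow>
    p \<in> polyring V \<and> (\<forall>t\<in>Poly_Mapping.keys p. \<not> independent E (Poly_Mapping.keys t))"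
proof (intro iffI conjI)
  assume p: "p \<in> polyring V \<and> (\<forall>t\<in>Poly_Mapping.keys p. \<not> independent E (Poly_Mapping.keys t))"
  have "Poly_Mapping.single t (Poly_Mapping.lookup p t) \<in> edge_ideal V E"
    if t: "t \<in> Poly_Mapping.keys p" for t
  proof -
    obtain i j where ij: "i \<in> Poly_Mapping.keys t" "j \<in> Poly_Mapping.keys t" "{i, j} \<in> E"
      using p t unfolding independent_def by blast
    moreover have "Poly_Mapping.keys t \<subseteq> V"
      using p t by (auto simp: polyring_def)
    ultimately show ?thesis
      using graph_onD(1)[OF assms ij(3)] by (intro monomial_in_edge_ideal[of i j]) auto
  qed
  then have "(\<Sum>t\<in>Poly_Mapping.keys p. Poly_Mapping.single t (Poly_Mapping.lookup p t))
      \<in> edge_ideal V E"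
    unfolding edge_ideal_def by (intro gen_ideal_sum) (simp add: edge_ideal_def)
  then show "p \<in> edge_ideal V E"
    by (simp add: sum_single_lookup)
qed (use edge_ideal_terms[OF assms] in blast)+

definition var_ideal :: "nat set \<Rightarrow> nat set \<Rightarrow> 'k::field mpoly set" where
  "var_ideal V C = {g \<in> polyring V. \<forall>t\<in>Poly_Mapping.keys g. Poly_Mapping.keys t \<inter> C \<noteq> {}}"

lemma keys_mult_meets:
  assumes "\<forall>t\<in>Poly_Mapping.keys b. Poly_Mapping.keys t \<inter> C \<noteq> {}"
  shows "\<forall>t\<in>Poly_Mapping.keys (a * b :: 'k::field mpoly). Poly_Mapping.keys t \<inter> C \<noteq> {}"
  using assms keys_mult[of a b] by (fastforce simp: keys_add_nat)

lemma keys_mult_meets_cases: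
  fixes a b :: "'k::field mpoly"
  assumes "\<forall>t\<in>Poly_Mapping.keys (a * b). Poly_Mapping.keys t \<inter> C \<noteq> {}"
  shows "(\<forall>t\<in>Poly_Mapping.keys a. Poly_Mapping.keys t \<inter> C \<noteq> {})
    \<or> (\<forall>t\<in>Poly_Mapping.keys b. Poly_Mapping.keys t \<inter> C \<noteq> {})"
proof (rule ccontr)
  define Z :: "(nat \<Rightarrow>\<^sub>0 nat) set" where "Z = {t. Poly_Mapping.keys t \<inter> C = {}}"
  assume "\<not> ?thesis"
  then have "Poly_Mapping.keys a \<inter> Z \<noteq> {}" "Poly_Mapping.keys b \<inter> Z \<noteq> {}"
    by (auto simp: Z_def)
  obtain a0 a1 where a: "a = a0 + a1" "Poly_Mapping.keys a0 = Poly_Mapping.keys a \<inter> Z"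
    "Poly_Mapping.keys a1 = Poly_Mapping.keys a - Z"
    by (rule poly_mapping_split_keys)
  obtain b0 b1 where b: "b = b0 + b1" "Poly_Mapping.keys b0 = Poly_Mapping.keys b \<inter> Z"
    "Poly_Mapping.keys b1 = Poly_Mapping.keys b - Z"
    by (rule poly_mapping_split_keys)
  have "a0 \<noteq> 0" "b0 \<noteq> 0"
    using a(2) b(2) \<open>Poly_Mapping.keys a \<inter> Z \<noteq> {}\<close> \<open>Poly_Mapping.keys b \<inter> Z \<noteq> {}\<close>
    by (metis keys_eq_empty)+
  then have "Poly_Mapping.keys (a0 * b0) \<noteq> {}"
    by simp
  then obtain k where k: "k \<in> Poly_Mapping.keys (a0 * b0)"
    by blast
  obtain s t where "k = s + t" "s \<in> Poly_Mapping.keys a0" "t \<in> Poly_Mapping.keys b0"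
    using k keys_mult[of a0 b0] by blast
  then have "k \<in> Z"
    using a(2) b(2) by (auto simp: Z_def keys_add_nat)
  have "\<forall>t\<in>Poly_Mapping.keys (a0 * b1). Poly_Mapping.keys t \<inter> C \<noteq> {}"
    using keys_mult_meets[of b1 C a0] b(3) by (auto simp: Z_def)
  moreover have "\<forall>t\<in>Poly_Mapping.keys (a1 * b). Poly_Mapping.keys t \<inter> C \<noteq> {}"
    using keys_mult_meets[of a1 C b] a(3) by (auto simp: Z_def mult.commute)
  ultimately have "k \<notin> Poly_Mapping.keys (a0 * b1 + a1 * b)"
    using \<open>k \<in> Z\<close> keys_add[of "a0 * b1" "a1 * b"] by (auto simp: Z_def)
  moreover have "a * b = a0 * b0 + (a0 * b1 + a1 * b)"
    by (simp add: a(1) b(1) algebra_simps)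
  ultimately have "k \<in> Poly_Mapping.keys (a * b)"
    using k by (simp add: in_keys_iff lookup_add)
  then show False
    using assms \<open>k \<in> Z\<close> by (auto simp: Z_def)
qed

lemma prime_var_ideal: "prime_ideal V (var_ideal V C :: 'k::field mpoly set)"
proof -
  have "is_ideal V (var_ideal V C :: 'k mpoly set)"
    unfolding is_ideal_def
  proof (intro conjI ballI)
    show "var_ideal V C \<subseteq> polyring V" "0 \<in> var_ideal V C"
      by (auto simp: var_ideal_def)
    show "a + b \<in> var_ideal V C" if "a \<in> var_ideal V C" "b \<in> var_ideal V C" for a b :: "'k mpoly"
      using that keys_add[of a b] by (auto simp: var_ideal_def intro: polyring_add)
    show "r * a \<in> var_ideal V C" if "r \<in> polyring V" "a \<in> var_ideal V C" for r a :: "'k mpoly"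
      using that keys_mult_meets[of a C r] by (auto simp: var_ideal_def intro: polyring_mult)
  qed
  moreover have "1 \<notin> var_ideal V C"
    by (simp add: var_ideal_def)
  ultimately show ?thesis
    using keys_mult_meets_cases polyring_one unfolding prime_ideal_def var_ideal_def by blast
qed

lemma prime_ideal_one_notin: "prime_ideal V P \<Longrightarrow> 1 \<notin> P"
  unfolding prime_ideal_def is_ideal_def by (metis mult.right_neutral subsetI subset_antisym)

lemma prime_ideal_prod:
  assumes "prime_ideal V P" "finite S" "\<And>s. s \<in> S \<Longrightarrow> h s \<in> polyring V" "prod h S \<in> P"
  shows "\<exists>s\<in>S. h s \<in> P"
  using assms(2-4)
proof (induction S rule: finite_induct)
  case empty
  then show ?case
    using prime_ideal_one_notin[OF assms(1)] by simp
next
  case (insert x S)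
  then have "h x \<in> P \<or> prod h S \<in> P"
    using assms(1) polyring_prod[of S h V] unfolding prime_ideal_def by simp
  then show ?case
    using insert by blast
qed

section \<open>The v-number of a graph\<close>

definition set_monom :: "nat set \<Rightarrow> nat \<Rightarrow>\<^sub>0 nat" where
  "set_monom A = (\<Sum>a\<in>A. Poly_Mapping.single a 1)"

lemma lookup_set_monom: "finite A \<Longrightarrow> Poly_Mapping.lookup (set_monom A) i = (if i \<in> A then 1 else 0)"
  by (simp add: set_monom_def lookup_sum lookup_single when_def)

lemma keys_set_monom: "finite A \<Longrightarrow> Poly_Mapping.keys (set_monom A) = A"
  by (auto simp: in_keys_iff lookup_set_monom split: if_splits)

lemma mdeg_set_monom: "finite A \<Longrightarrow> mdeg (set_monom A) = card A"
  by (simp add: mdeg_def keys_set_monom lookup_set_monom)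

lemma colon_edge_ideal_set_monom:
  assumes "graph_on V E" "v_witness V E A" "finite A"
  shows "colon V (edge_ideal V E) (monom (set_monom A)) = (var_ideal V (neighbourhood E A) :: 'k::field mpoly set)"
proof (rule set_eqI)
  fix g :: "'k mpoly"
  have indep: "independent E A" "vertex_cover E (neighbourhood E A)"
    using assms(2) by (auto simp: v_witness_def)
  have "monom (set_monom A) \<in> polyring V"
    using assms(2,3) by (intro polyring_single) (auto simp: keys_set_monom v_witness_def)
  moreover have "Poly_Mapping.keys (g * monom (set_monom A)) = (+) (set_monom A) ` Poly_Mapping.keys g"
    by (simp add: mult.commute[of g] keys_single_mult)
  ultimately show "g \<in> colon V (edge_ideal V E) (monom (set_monom A)) \<longleftrightarrow> g \<in> var_ideal V (neighbourhood E A)"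
    using assms(3) not_independent_Un_iff[OF indep]
    by (auto simp: colon_def var_ideal_def edge_ideal_iff[OF assms(1)] keys_add_nat keys_set_monom
        intro: polyring_mult)
qed

lemma monom_sum: "monom (\<Sum>u\<in>S. w u) = (\<Prod>u\<in>S. monom (w u) :: 'k::field mpoly)"
proof (induction S rule: infinite_finite_induct)
  case (insert x F)
  have "monom (w x + sum w F) = (monom (w x) * monom (sum w F) :: 'k mpoly)"
    by (simp add: mult_single)
  with insert show ?case
    by simp
qed simp_all

text \<open>If every term \<open>u\<close> of \<open>f\<close> admitted a monomial \<open>w\<^sub>u \<notin> P\<close> with \<open>w\<^sub>u u \<in> I(G)\<close>, the product
  of all \<open>w\<^sub>u\<close> would multiply \<open>f\<close> into \<open>I(G)\<close>, so it would lie in the prime \<open>P = (I(G) : f)\<close>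
  together with none of its factors.\<close>

lemma prime_colon_edge_ideal_term:
  assumes "graph_on V E" "f \<in> polyring V" and prime: "prime_ideal V P"
    and P: "P = colon V (edge_ideal V E) (f :: 'k::field mpoly)"
  obtains u where "u \<in> Poly_Mapping.keys f"
    "\<And>w. Poly_Mapping.keys w \<subseteq> V \<Longrightarrow> \<not> independent E (Poly_Mapping.keys w \<union> Poly_Mapping.keys u)
      \<Longrightarrow> monom w \<in> P"
proof (rule ccontr)
  assume "\<not> thesis"
  then have "\<forall>u\<in>Poly_Mapping.keys f. \<exists>w. Poly_Mapping.keys w \<subseteq> V
      \<and> \<not> independent E (Poly_Mapping.keys w \<union> Poly_Mapping.keys u) \<and> monom w \<notin> P"
    using that by blast
  then obtain ww where ww: "\<And>u. u \<in> Poly_Mapping.keys f \<Longrightarrow> Poly_Mapping.keys (ww u) \<subseteq> V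
      \<and> \<not> independent E (Poly_Mapping.keys (ww u) \<union> Poly_Mapping.keys u) \<and> monom (ww u) \<notin> P"
    by metis
  define W where "W = (\<Sum>u\<in>Poly_Mapping.keys f. ww u)"
  have keys_W: "Poly_Mapping.keys (ww u) \<subseteq> Poly_Mapping.keys W" if "u \<in> Poly_Mapping.keys f" for u
  proof -
    have "Poly_Mapping.lookup (ww u) i \<le> Poly_Mapping.lookup W i" for i
      unfolding W_def lookup_sum using that by (intro member_le_sum) auto
    then show ?thesis
      by (metis in_keys_iff le_zero_eq subsetI)
  qed
  have W: "Poly_Mapping.keys W \<subseteq> V"
    using keys_sum[of ww "Poly_Mapping.keys f"] ww unfolding W_def by blast
  have "\<not> independent E (Poly_Mapping.keys (W + u))" if "u \<in> Poly_Mapping.keys f" for u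
    using ww[OF that] keys_W[OF that] unfolding independent_def keys_add_nat by blast
  then have "monom W * f \<in> edge_ideal V E"
    using W assms(2)
    by (auto simp: edge_ideal_iff[OF assms(1)] keys_single_mult intro: polyring_mult polyring_single)
  then have "monom W \<in> P"
    using W by (auto simp: P colon_def intro: polyring_single)
  moreover have "monom W = (\<Prod>u\<in>Poly_Mapping.keys f. monom (ww u) :: 'k mpoly)"
    unfolding W_def by (rule monom_sum)
  ultimately obtain u where "u \<in> Poly_Mapping.keys f" "monom (ww u) \<in> P"
    using prime_ideal_prod[OF prime, of "Poly_Mapping.keys f" "\<lambda>u. monom (ww u)"] ww
    by (auto intro: polyring_single)
  then show False
    using ww by blast
qed

lemma v_witness_of_colon_term:
  assumes graph: "graph_on V E" and prime: "prime_ideal V (colon V (edge_ideal V E) (f :: 'k::field mpoly))"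
    and u: "u \<in> Poly_Mapping.keys f" "Poly_Mapping.keys u \<subseteq> V"
    and uP: "\<And>w. Poly_Mapping.keys w \<subseteq> V \<Longrightarrow> \<not> independent E (Poly_Mapping.keys w \<union> Poly_Mapping.keys u)
      \<Longrightarrow> monom w \<in> colon V (edge_ideal V E) f"
  shows "v_witness V E (Poly_Mapping.keys u)"
proof -
  let ?P = "colon V (edge_ideal V E) f" and ?A = "Poly_Mapping.keys u"
  have "independent E ?A"
    using uP[of 0] prime_ideal_one_notin[OF prime] by auto
  have var_in_P: "var x * var y \<in> ?P" if "{x, y} \<in> E" for x y
  proof -
    let ?w = "Poly_Mapping.single x 1 + Poly_Mapping.single y 1 :: nat \<Rightarrow>\<^sub>0 nat"
    have "Poly_Mapping.keys ?w = {x, y}"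
      by (auto simp: keys_add_nat)
    then show ?thesis
      using uP[of ?w] graph_onD[OF graph that] that
      unfolding var_mult_var independent_def by auto
  qed
  have "z \<in> neighbourhood E ?A" if "z \<in> V" "var z \<in> ?P" for z
  proof (rule not_independent_insert[OF graph \<open>independent E ?A\<close>])
    have "var z * f \<in> edge_ideal V E"
      using that(2) by (simp add: colon_def)
    moreover have "Poly_Mapping.single z 1 + u \<in> Poly_Mapping.keys (var z * f)"
      using u by (simp add: var_def keys_single_mult)
    ultimately show "\<not> independent E (insert z ?A)"
      by (auto simp: edge_ideal_iff[OF graph] keys_add_nat)
  qed
  moreover have "var z \<in> polyring V" if "z \<in> V" for z
    using that by (simp add: var_def polyring_single)
  ultimately have "vertex_cover E (neighbourhood E ?A)"
    using var_in_P prime graph_onD(2,3)[OF graph] unfolding vertex_cover_def prime_ideal_def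
    by meson
  then show ?thesis
    using u(2) \<open>independent E ?A\<close> by (simp add: v_witness_def)
qed

lemma v_witness_of_prime_colon:
  assumes graph: "graph_on V E" and f: "homog V k f"
    and prime: "prime_ideal V (colon V (edge_ideal V E) (f :: 'k::field mpoly))"
  obtains A where "v_witness V E A" "card A \<le> k"
proof -
  have "f \<in> polyring V"
    using f by (simp add: homog_def)
  then obtain u where u: "u \<in> Poly_Mapping.keys f"
    and uP: "\<And>w. Poly_Mapping.keys w \<subseteq> V \<Longrightarrow> \<not> independent E (Poly_Mapping.keys w \<union> Poly_Mapping.keys u)
      \<Longrightarrow> monom w \<in> colon V (edge_ideal V E) f"
    using prime_colon_edge_ideal_term[OF graph _ prime refl] by blast
  have "Poly_Mapping.keys u \<subseteq> V"
    using \<open>f \<in> polyring V\<close> u by (auto simp: polyring_def)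
  have "card (Poly_Mapping.keys u) = (\<Sum>i\<in>Poly_Mapping.keys u. 1)"
    by simp
  also have "\<dots> \<le> mdeg u"
    unfolding mdeg_def by (intro sum_mono) (auto simp: in_keys_iff)
  finally have "card (Poly_Mapping.keys u) \<le> k"
    using f u by (simp add: homog_def)
  then show ?thesis
    using that v_witness_of_colon_term[OF graph prime u \<open>Poly_Mapping.keys u \<subseteq> V\<close> uP] by blast
qed

theorem v_graph_eq_v_comb:
  assumes "finite V" "graph_on V E"
  shows "v_graph TYPE('k::field) V E = v_comb V E"
proof -
  let ?I = "edge_ideal V E :: 'k mpoly set"
  let ?Q = "\<lambda>k. \<exists>f P. homog V k f \<and> P \<in> ass V ?I \<and> colon V ?I f = P"
  obtain A where A: "v_witness V E A" "card A = v_comb V E"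
    using v_comb_obtain[OF assms] .
  have "finite A"
    using A(1) assms(1) by (auto simp: v_witness_def intro: finite_subset)
  let ?f = "monom (set_monom A) :: 'k mpoly"
  have "?f \<in> polyring V"
    using A(1) \<open>finite A\<close> by (intro polyring_single) (auto simp: keys_set_monom v_witness_def)
  moreover have "colon V ?I ?f = var_ideal V (neighbourhood E A)"
    by (rule colon_edge_ideal_set_monom[OF assms(2) A(1) \<open>finite A\<close>])
  ultimately have "homog V (card A) ?f" "colon V ?I ?f \<in> ass V ?I"
    using \<open>finite A\<close> prime_var_ideal by (auto simp: homog_def mdeg_set_monom ass_def)
  then have "?Q (card A)"
    by blast
  then have "?Q (v_comb V E)"
    using A(2) by simp
  then have "Least ?Q \<le> v_comb V E"
    by (rule Least_le)
  obtain f where f: "homog V (Least ?Q) f" "prime_ideal V (colon V ?I f)"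
    using LeastI[of ?Q, OF \<open>?Q (v_comb V E)\<close>] by (auto simp: ass_def)
  obtain A' where "v_witness V E A'" "card A' \<le> Least ?Q"
    using v_witness_of_prime_colon[OF assms(2) f] .
  then have "v_comb V E \<le> Least ?Q"
    using v_comb_le le_trans by blast
  with \<open>Least ?Q \<le> v_comb V E\<close> show ?thesis
    unfolding v_graph_def v_number_def by (intro antisym)
qed

section \<open>Graph isomorphisms\<close>

definition graph_iso :: "('a \<Rightarrow> 'b) \<Rightarrow> 'a set \<Rightarrow> 'a set set \<Rightarrow> 'b set \<Rightarrow> 'b set set \<Rightarrow> bool" where
  "graph_iso f V E V' E' \<longleftrightarrow> bij_betw f V V' \<and> (\<forall>x\<in>V. \<forall>y\<in>V. {f x, f y} \<in> E' \<longleftrightarrow> {x, y} \<in> E)"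

lemma graph_iso_inv:
  assumes "graph_iso f V E V' E'"
  shows "graph_iso (the_inv_into V f) V' E' V E"
proof -
  have bij: "bij_betw f V V'"
    using assms by (simp add: graph_iso_def)
  have "{the_inv_into V f x', the_inv_into V f y'} \<in> E \<longleftrightarrow> {x', y'} \<in> E'"
    if xy': "x' \<in> V'" "y' \<in> V'" for x' y'
  proof -
    obtain x y where "x \<in> V" "y \<in> V" "x' = f x" "y' = f y"
      using bij xy' by (auto simp: bij_betw_def)
    then show ?thesis
      using assms bij by (simp add: graph_iso_def bij_betw_def the_inv_into_f_f)
  qed
  then show ?thesis
    using bij_betw_the_inv_into[OF bij] by (simp add: graph_iso_def)
qed

lemma v_witness_graph_iso:
  assumes "graph_on V E" "graph_on V' E'" "graph_iso f V E V' E'" "v_witness V E A"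
  shows "v_witness V' E' (f ` A)"
proof -
  have bij: "bij_betw f V V'" and adj: "\<And>x y. x \<in> V \<Longrightarrow> y \<in> V \<Longrightarrow> {f x, f y} \<in> E' \<longleftrightarrow> {x, y} \<in> E"
    using assms(3) by (auto simp: graph_iso_def)
  have A: "A \<subseteq> V" "independent E A" "vertex_cover E (neighbourhood E A)"
    using assms(4) by (auto simp: v_witness_def)
  have nbr: "f x \<in> neighbourhood E' (f ` A)" if x: "x \<in> neighbourhood E A" for x
  proof -
    obtain a where "a \<in> A" "{x, a} \<in> E"
      using x by (auto simp: neighbourhood_def)
    then show ?thesis
      using A(1) adj graph_onD(2,3)[OF assms(1)] by (auto intro!: neighbourhoodI)
  qed
  have "f ` A \<subseteq> V'"
    using A(1) bij by (auto simp: bij_betw_def)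
  moreover have "independent E' (f ` A)"
    unfolding independent_def
  proof (intro ballI)
    fix x' y' assume "x' \<in> f ` A" "y' \<in> f ` A"
    then obtain x y where "x \<in> A" "y \<in> A" "x' = f x" "y' = f y"
      by blast
    then show "{x', y'} \<notin> E'"
      using A(1,2) adj unfolding independent_def by blast
  qed
  moreover have "vertex_cover E' (neighbourhood E' (f ` A))"
    unfolding vertex_cover_def
  proof (intro allI impI)
    fix x' y' assume e: "{x', y'} \<in> E'"
    then obtain x y where "x \<in> V" "y \<in> V" "x' = f x" "y' = f y"
      using bij graph_onD(2,3)[OF assms(2) e] unfolding bij_betw_def by blast
    then show "x' \<in> neighbourhood E' (f ` A) \<or> y' \<in> neighbourhood E' (f ` A)"
      using e adj A(3) nbr unfolding vertex_cover_def by blast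
  qed
  ultimately show ?thesis
    by (simp add: v_witness_def)
qed

lemma v_comb_graph_iso_le:
  assumes "finite V" "graph_on V E" "graph_on V' E'" "graph_iso f V E V' E'"
  shows "v_comb V' E' \<le> v_comb V E"
proof -
  obtain A where A: "v_witness V E A" "card A = v_comb V E"
    using v_comb_obtain[OF assms(1,2)] .
  have "inj_on f A"
    using assms(4) A(1) by (auto simp: graph_iso_def bij_betw_def v_witness_def intro: inj_on_subset)
  then show ?thesis
    using v_comb_le[OF v_witness_graph_iso[OF assms(2-4) A(1)]] A(2) by (simp add: card_image)
qed

lemma v_comb_graph_iso:
  assumes "finite V" "graph_on V E" "graph_on V' E'" "graph_iso f V E V' E'"
  shows "v_comb V' E' = v_comb V E"
proof (rule antisym)
  show "v_comb V' E' \<le> v_comb V E"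
    using v_comb_graph_iso_le[OF assms] .
  have "finite V'"
    using assms(1,4) by (auto simp: graph_iso_def bij_betw_def)
  then show "v_comb V E \<le> v_comb V' E'"
    using v_comb_graph_iso_le[OF _ assms(3,2) graph_iso_inv[OF assms(4)]] by blast
qed

lemma graph_iso_image:
  assumes "graph_on V E" "inj_on f V"
  shows "graph_iso f V E (f ` V) ((`) f ` E)"
proof -
  have "{f x, f y} \<in> (`) f ` E \<longleftrightarrow> {x, y} \<in> E" if "x \<in> V" "y \<in> V" for x y
  proof
    assume "{f x, f y} \<in> (`) f ` E"
    then obtain e where "e \<in> E" "f ` e = f ` {x, y}"
      by auto
    moreover have "e \<subseteq> V"
      using \<open>e \<in> E\<close> assms(1) by (auto simp: graph_on_def)
    ultimately have "e = {x, y}"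
      using that inj_on_image_eq_iff[OF assms(2), of e "{x, y}"] by simp
    with \<open>e \<in> E\<close> show "{x, y} \<in> E"
      by simp
  next
    assume "{x, y} \<in> E"
    then show "{f x, f y} \<in> (`) f ` E"
      by (intro image_eqI[of _ _ "{x, y}"]) auto
  qed
  then show ?thesis
    using assms(2) by (simp add: graph_iso_def inj_on_imp_bij_betw)
qed

lemma graph_on_image:
  assumes "graph_on V E" "inj_on f V"
  shows "graph_on (f ` V) ((`) f ` E)"
  unfolding graph_on_def
proof
  fix e' assume "e' \<in> (`) f ` E"
  then obtain x y where "e' = {f x, f y}" "x \<noteq> y" "x \<in> V" "y \<in> V"
    using assms(1) unfolding graph_on_def by auto
  then show "\<exists>x' y'. e' = {x', y'} \<and> x' \<noteq> y' \<and> x' \<in> f ` V \<and> y' \<in> f ` V"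
    using assms(2) by (auto dest: inj_onD)
qed

section \<open>Joining two graphs through a new vertex\<close>

lemma v_witness_insert:
  assumes "graph_on V E" "A \<subseteq> V" "independent E A" "u \<in> V"
    and cover: "\<And>x y. {x, y} \<in> E \<Longrightarrow> x \<in> neighbourhood E A \<or> y \<in> neighbourhood E A \<or> u \<in> {x, y}"
  obtains A' where "v_witness V E A'" "card A' \<le> card A + 1"
proof (cases "u \<in> neighbourhood E A")
  case True
  then have "v_witness V E A"
    using assms(2,3) cover by (auto simp: v_witness_def vertex_cover_def)
  then show ?thesis
    using that by simp
next
  case False
  have "{u} \<notin> E"
    using graph_onD(1)[OF assms(1), of u u] by auto
  then have "independent E (insert u A)"
    using assms(3) False
    by (auto simp: independent_def insert_commute intro: neighbourhoodI)
  moreover have "vertex_cover E (neighbourhood E (insert u A))"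
    unfolding vertex_cover_def
  proof (intro allI impI)
    fix x y assume e: "{x, y} \<in> E"
    have "y \<in> neighbourhood E (insert u A)" if "x = u"
      using e that by (intro neighbourhoodI[of u]) (auto simp: insert_commute)
    moreover have "x \<in> neighbourhood E (insert u A)" if "y = u"
      using e that by (intro neighbourhoodI[of u]) auto
    ultimately show "x \<in> neighbourhood E (insert u A) \<or> y \<in> neighbourhood E (insert u A)"
      using cover[OF e] neighbourhood_mono[of A "insert u A" E E] by blast
  qed
  ultimately have "v_witness V E (insert u A)"
    using assms(2,4) by (simp add: v_witness_def)
  moreover have "card (insert u A) \<le> card A + 1"
    by (cases "finite A") (simp_all add: card_insert_if)
  ultimately show ?thesis
    using that by blast
qed

locale vertex_join =
  fixes V1 :: "'a set" and E1 :: "'a set set" and V2 :: "'a set" and E2 :: "'a set set"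
    and w :: 'a and u1 :: 'a and u2 :: 'a
  assumes finite1: "finite V1" and finite2: "finite V2"
    and graph1: "graph_on V1 E1" and graph2: "graph_on V2 E2"
    and disjoint: "V1 \<inter> V2 = {}" and w_notin: "w \<notin> V1" "w \<notin> V2"
    and u1: "u1 \<in> V1" and u2: "u2 \<in> V2"
begin

abbreviation V :: "'a set" where
  "V \<equiv> insert w (V1 \<union> V2)"

abbreviation E :: "'a set set" where
  "E \<equiv> E1 \<union> E2 \<union> {{u1, w}, {w, u2}}"

lemma finite_join: "finite V"
  using finite1 finite2 by simp

lemma graph_on_join: "graph_on V E"
  unfolding graph_on_def
proof
  fix e assume "e \<in> E"
  then consider "e \<in> E1" | "e \<in> E2" | "e = {u1, w}" | "e = {w, u2}"
    by blast
  then show "\<exists>x y. e = {x, y} \<and> x \<noteq> y \<and> x \<in> V \<and> y \<in> V"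
  proof cases
    case 1
    then show ?thesis
      using graph1 unfolding graph_on_def by blast
  next
    case 2
    then show ?thesis
      using graph2 unfolding graph_on_def by blast
  next
    case 3
    then show ?thesis
      using u1 w_notin by blast
  next
    case 4
    then show ?thesis
      using u2 w_notin by blast
  qed
qed

lemma vertex_join_swap: "vertex_join V2 E2 V1 E1 w u2 u1"
  using finite1 finite2 graph1 graph2 disjoint w_notin u1 u2 by unfold_locales auto

lemma edge_from_V1:
  assumes "{x, a} \<in> E" "x \<in> V1"
  shows "{x, a} \<in> E1 \<or> (x = u1 \<and> a = w)"
proof -
  have "{x, a} \<notin> E2"
    using assms(2) disjoint graph_onD(2)[OF graph2] by blast
  moreover have "{x, a} \<noteq> {w, u2}"
    using assms(2) disjoint u2 w_notin by (auto simp: doubleton_eq_iff)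
  moreover have "{x, a} = {u1, w} \<Longrightarrow> x = u1 \<and> a = w"
    using assms(2) w_notin by (auto simp: doubleton_eq_iff)
  ultimately show ?thesis
    using assms(1) by blast
qed

lemma v_witness_Un:
  assumes A1: "v_witness V1 E1 A1" "u1 \<in> A1" and A2: "v_witness V2 E2 A2"
  shows "v_witness V E (A1 \<union> A2)"
proof -
  have sub: "A1 \<subseteq> V1" "A2 \<subseteq> V2"
    using A1 A2 by (auto simp: v_witness_def)
  have "independent E (A1 \<union> A2)"
    unfolding independent_def
  proof (intro ballI notI)
    fix x y assume xy: "x \<in> A1 \<union> A2" "y \<in> A1 \<union> A2" and e: "{x, y} \<in> E"
    have "x \<noteq> w" "y \<noteq> w"
      using xy sub w_notin by auto
    then have "{x, y} \<in> E1 \<or> {x, y} \<in> E2"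
      using e by (auto simp: doubleton_eq_iff)
    moreover have "x \<in> A1 \<and> y \<in> A1" if "{x, y} \<in> E1"
      using graph_onD(2,3)[OF graph1 that] xy sub disjoint by blast
    moreover have "x \<in> A2 \<and> y \<in> A2" if "{x, y} \<in> E2"
      using graph_onD(2,3)[OF graph2 that] xy sub disjoint by blast
    ultimately show False
      using A1(1) A2 by (auto simp: v_witness_def independent_def)
  qed
  moreover have "vertex_cover E (neighbourhood E (A1 \<union> A2))"
    unfolding vertex_cover_def
  proof (intro allI impI)
    fix x y assume e: "{x, y} \<in> E"
    have "w \<in> neighbourhood E (A1 \<union> A2)"
      using A1(2) by (intro neighbourhoodI[of u1]) (auto simp: insert_commute)
    moreover have "neighbourhood E1 A1 \<subseteq> neighbourhood E (A1 \<union> A2)"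
      by (rule neighbourhood_mono) auto
    moreover have "neighbourhood E2 A2 \<subseteq> neighbourhood E (A1 \<union> A2)"
      by (rule neighbourhood_mono) auto
    moreover have "{x, y} \<in> E1 \<or> {x, y} \<in> E2 \<or> x = w \<or> y = w"
      using e by (auto simp: doubleton_eq_iff)
    ultimately show "x \<in> neighbourhood E (A1 \<union> A2) \<or> y \<in> neighbourhood E (A1 \<union> A2)"
      using A1(1) A2 unfolding v_witness_def vertex_cover_def by blast
  qed
  ultimately show ?thesis
    using sub by (auto simp: v_witness_def)
qed

lemma v_witness_restrict:
  assumes "v_witness V E A"
  obtains A1 where "v_witness V1 E1 A1" "card A1 \<le> card (A \<inter> V1) + (if w \<in> A then 1 else 0)"
proof -
  have indep: "independent E1 (A \<inter> V1)"
    using assms by (auto simp: v_witness_def independent_def)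
  have nbr: "x \<in> neighbourhood E1 (A \<inter> V1) \<or> (x = u1 \<and> w \<in> A)"
    if x: "x \<in> V1" "x \<in> neighbourhood E A" for x
  proof -
    obtain a where a: "a \<in> A" "{x, a} \<in> E"
      using x(2) by (auto simp: neighbourhood_def)
    show ?thesis
      using edge_from_V1[OF a(2) x(1)] graph_onD(3)[OF graph1] a
      by (auto intro: neighbourhoodI)
  qed
  have cover: "x \<in> neighbourhood E1 (A \<inter> V1) \<or> y \<in> neighbourhood E1 (A \<inter> V1) \<or> (w \<in> A \<and> u1 \<in> {x, y})"
    if e: "{x, y} \<in> E1" for x y
  proof -
    have "x \<in> neighbourhood E A \<or> y \<in> neighbourhood E A"
      using assms e unfolding v_witness_def vertex_cover_def by blast
    then show ?thesis
      using nbr graph_onD(2,3)[OF graph1 e] by blast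
  qed
  show ?thesis
  proof (cases "w \<in> A")
    case True
    obtain A1 where "v_witness V1 E1 A1" "card A1 \<le> card (A \<inter> V1) + 1"
      using v_witness_insert[OF graph1 _ indep u1] cover by blast
    with True show ?thesis
      using that by simp
  next
    case False
    then have "v_witness V1 E1 (A \<inter> V1)"
      using indep cover by (auto simp: v_witness_def vertex_cover_def)
    with False show ?thesis
      using that by simp
  qed
qed

lemma card_split:
  assumes "A \<subseteq> V"
  shows "card A = card (A \<inter> V1) + card (A \<inter> V2) + (if w \<in> A then 1 else 0)"
proof -
  have fin: "finite (A \<inter> V1)" "finite (A \<inter> V2)"
    using finite1 finite2 by auto
  have "card (A \<inter> (V1 \<union> V2)) = card (A \<inter> V1) + card (A \<inter> V2)"
    using card_Un_disjoint[OF fin] disjoint by (simp add: Int_Un_distrib Int_assoc Int_left_commute)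
  moreover have "card A = card (A \<inter> (V1 \<union> V2)) + (if w \<in> A then 1 else 0)"
  proof (cases "w \<in> A")
    case True
    then have "insert w (A \<inter> (V1 \<union> V2)) = A"
      using assms by auto
    moreover have "w \<notin> A \<inter> (V1 \<union> V2)"
      using w_notin by auto
    ultimately show ?thesis
      using True card_insert_disjoint[of "A \<inter> (V1 \<union> V2)" w] finite1 finite2 by simp
  next
    case False
    then have "A \<inter> (V1 \<union> V2) = A"
      using assms by auto
    then show ?thesis
      using False by simp
  qed
  ultimately show ?thesis
    by simp
qed

theorem v_comb_join_le:
  assumes "v_witness V1 E1 A1" "card A1 = v_comb V1 E1" "u1 \<in> A1"
  shows "v_comb V E \<le> v_comb V1 E1 + v_comb V2 E2"
proof -
  obtain A2 where A2: "v_witness V2 E2 A2" "card A2 = v_comb V2 E2"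
    using v_comb_obtain[OF finite2 graph2] .
  have "v_comb V E \<le> card (A1 \<union> A2)"
    using v_witness_Un[OF assms(1,3) A2(1)] by (rule v_comb_le)
  also have "\<dots> \<le> card A1 + card A2"
    by (rule card_Un_le)
  finally show ?thesis
    using assms(2) A2(2) by simp
qed

theorem v_comb_join_ge: "v_comb V1 E1 + v_comb V2 E2 \<le> v_comb V E + 1"
proof -
  interpret swap: vertex_join V2 E2 V1 E1 w u2 u1
    by (rule vertex_join_swap)
  obtain A where A: "v_witness V E A" "card A = v_comb V E"
    using v_comb_obtain[OF finite_join graph_on_join] .
  obtain A1 where A1: "v_witness V1 E1 A1" "card A1 \<le> card (A \<inter> V1) + (if w \<in> A then 1 else 0)"
    using v_witness_restrict[OF A(1)] .
  have "swap.V = V" "swap.E = E"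
    by auto
  then have "v_witness swap.V swap.E A"
    using A(1) by (simp only:)
  then obtain A2 where A2: "v_witness V2 E2 A2" "card A2 \<le> card (A \<inter> V2) + (if w \<in> A then 1 else 0)"
    by (rule swap.v_witness_restrict)
  have "card A = card (A \<inter> V1) + card (A \<inter> V2) + (if w \<in> A then 1 else 0)"
    using A(1) by (intro card_split) (simp add: v_witness_def)
  then show ?thesis
    using v_comb_le[OF A1(1)] v_comb_le[OF A2(1)] A1(2) A2(2) A(2) by (simp split: if_splits)
qed

end

section \<open>Cycles, paths and their 1-clique sum\<close>

lemma cycle_E_iff:
  "{x, y} \<in> cycle_E n \<longleftrightarrow> (1 \<le> x \<and> x < n \<and> y = x + 1) \<or> (1 \<le> y \<and> y < n \<and> x = y + 1)
     \<or> (x = n \<and> y = 1) \<or> (x = 1 \<and> y = n)"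
  unfolding cycle_E_def by (auto simp: doubleton_eq_iff)

lemma graph_on_cycle:
  assumes "2 \<le> n"
  shows "graph_on (cycle_V n) (cycle_E n)"
proof -
  have "\<exists>x y. {i, i + 1} = {x, y} \<and> x \<noteq> y \<and> x \<in> {1..n} \<and> y \<in> {1..n}" if "1 \<le> i" "i < n" for i
    using that by (intro exI[of _ i] exI[of _ "i + 1"]) auto
  moreover have "\<exists>x y. {n, 1} = {x, y} \<and> x \<noteq> y \<and> x \<in> {1..n} \<and> y \<in> {1..n}"
    using assms by (intro exI[of _ n] exI[of _ 1]) auto
  ultimately show ?thesis
    unfolding graph_on_def cycle_E_def cycle_V_def by blast
qed

lemma graph_on_path: "graph_on (path_V k) (path_E k)"
proof -
  have "\<exists>x y. {i, i + 1} = {x, y} \<and> x \<noteq> y \<and> x \<in> {1..k} \<and> y \<in> {1..k}" if "1 \<le> i" "i < k" for i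
    using that by (intro exI[of _ i] exI[of _ "i + 1"]) auto
  then show ?thesis
    unfolding graph_on_def path_E_def path_V_def by blast
qed

lemma graph_iso_cycle_rotate:
  assumes "2 \<le> n" "a \<in> cycle_V n"
  shows "graph_iso (\<lambda>x. if x \<le> a then x + n - a else x - a) (cycle_V n) (cycle_E n) (cycle_V n) (cycle_E n)"
proof -
  let ?g = "\<lambda>x. if x \<le> a then x + n - a else x - a"
  have "inj_on ?g (cycle_V n)"
    using assms(2) by (auto simp: inj_on_def cycle_V_def split: if_splits)
  moreover have "?g ` cycle_V n = cycle_V n"
  proof
    show "?g ` cycle_V n \<subseteq> cycle_V n"
      using assms(2) by (auto simp: cycle_V_def)
    show "cycle_V n \<subseteq> ?g ` cycle_V n"
    proof
      fix y assume y: "y \<in> cycle_V n"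
      show "y \<in> ?g ` cycle_V n"
      proof (cases "y \<le> n - a")
        case True
        then show ?thesis
          using y assms(2) by (intro image_eqI[of _ _ "y + a"]) (auto simp: cycle_V_def)
      next
        case False
        then show ?thesis
          using y assms(2) by (intro image_eqI[of _ _ "y + a - n"]) (auto simp: cycle_V_def)
      qed
    qed
  qed
  moreover have "\<forall>x\<in>cycle_V n. \<forall>y\<in>cycle_V n. {?g x, ?g y} \<in> cycle_E n \<longleftrightarrow> {x, y} \<in> cycle_E n"
    unfolding cycle_E_iff using assms by (auto simp: cycle_V_def)
  ultimately show ?thesis
    by (simp add: graph_iso_def bij_betw_def)
qed

lemma cycle_min_witness_containing_last:
  assumes "3 \<le> n"
  obtains A where "v_witness (cycle_V n) (cycle_E n) A" "card A = v_comb (cycle_V n) (cycle_E n)" "n \<in> A"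
proof -
  have graph: "graph_on (cycle_V n) (cycle_E n)"
    using assms by (intro graph_on_cycle) simp
  obtain A0 where A0: "v_witness (cycle_V n) (cycle_E n) A0" "card A0 = v_comb (cycle_V n) (cycle_E n)"
    using v_comb_obtain[OF _ graph] by (auto simp: cycle_V_def)
  have "{1, 2} \<in> cycle_E n"
    using assms by (simp add: cycle_E_iff)
  then obtain a where a: "a \<in> A0"
    using v_witness_nonempty[OF A0(1)] by blast
  then have a_V: "a \<in> cycle_V n"
    using A0(1) by (auto simp: v_witness_def)
  define g where "g x = (if x \<le> a then x + n - a else x - a)" for x
  have iso: "graph_iso g (cycle_V n) (cycle_E n) (cycle_V n) (cycle_E n)"
    unfolding g_def using assms a_V by (intro graph_iso_cycle_rotate) auto
  have "inj_on g A0"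
    using iso A0(1) by (auto simp: graph_iso_def bij_betw_def v_witness_def intro: inj_on_subset)
  then have "card (g ` A0) = v_comb (cycle_V n) (cycle_E n)"
    using A0(2) by (simp add: card_image)
  moreover have "n \<in> g ` A0"
    using a a_V by (auto simp: cycle_V_def g_def intro!: image_eqI[of _ _ a])
  ultimately show ?thesis
    using that v_witness_graph_iso[OF graph graph iso A0(1)] by blast
qed

lemma shifted_path_V:
  assumes "3 \<le> m"
  shows "(+) (n + 1) ` path_V (m - 2) = {n + 2..n + m - 1}"
proof -
  have "1 + (n + 1) = n + 2" "m - 2 + (n + 1) = n + m - 1"
    using assms by simp_all
  then show ?thesis
    unfolding path_V_def image_add_atLeastAtMost by (simp only:)
qed

lemma cp_vertex_join:
  assumes "3 \<le> n" "3 \<le> m"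
  shows "vertex_join (cycle_V n) (cycle_E n) ((+) (n + 1) ` path_V (m - 2)) ((`) ((+) (n + 1)) ` path_E (m - 2))
    (n + 1) n (n + 2)"
proof
  show "graph_on (cycle_V n) (cycle_E n)"
    using assms by (intro graph_on_cycle) simp
  show "graph_on ((+) (n + 1) ` path_V (m - 2)) ((`) ((+) (n + 1)) ` path_E (m - 2))"
    using graph_on_path by (rule graph_on_image) simp
qed (use assms in \<open>unfold shifted_path_V[OF assms(2)], auto simp: cycle_V_def\<close>)

lemma cp_V_eq:
  assumes "3 \<le> m"
  shows "cp_V n m = insert (n + 1) (cycle_V n \<union> (+) (n + 1) ` path_V (m - 2))"
  unfolding shifted_path_V[OF assms] using assms by (auto simp: cp_V_def cycle_V_def)

lemma shifted_path_E: "(`) ((+) d) ` path_E k = (\<lambda>i. {i, i + 1}) ` {d + 1..<d + k}"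
proof -
  have "path_E k = (\<lambda>i. {i, i + 1}) ` {1..<k}"
    by (auto simp: path_E_def)
  then have "(`) ((+) d) ` path_E k = (\<lambda>i. {i, i + 1}) ` ((+) d ` {1..<k})"
    by (simp add: image_image del: image_add_atLeastLessThan)
  also have "(+) d ` {1..<k} = {d + 1..<d + k}"
    by (simp add: add.commute)
  finally show ?thesis .
qed

lemma cp_E_eq:
  assumes "3 \<le> m"
  shows "cp_E n m = cycle_E n \<union> (`) ((+) (n + 1)) ` path_E (m - 2) \<union> {{n, n + 1}, {n + 1, n + 2}}"
proof -
  have "{n..<n + m - 1} = insert n (insert (n + 1) {n + 1 + 1..<n + 1 + (m - 2)})"
    using assms by auto
  moreover have "{{i, i + 1} | i. n \<le> i \<and> i < n + m - 1} = (\<lambda>i. {i, i + 1}) ` {n..<n + m - 1}"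
    by auto
  ultimately show ?thesis
    unfolding cp_E_def shifted_path_E by auto
qed

theorem proposition3p7:
  fixes n m :: nat
  assumes "n \<ge> 3" and "m \<ge> 3"
  shows "v_graph TYPE('k::field) (cycle_V n) (cycle_E n) + v_graph TYPE('k) (path_V (m - 2)) (path_E (m - 2))
           \<le> v_graph TYPE('k) (cp_V n m) (cp_E n m) + 1
       \<and> v_graph TYPE('k) (cp_V n m) (cp_E n m)
           \<le> v_graph TYPE('k) (cycle_V n) (cycle_E n) + v_graph TYPE('k) (path_V (m - 2)) (path_E (m - 2))"
proof -
  let ?V2 = "(+) (n + 1) ` path_V (m - 2)" and ?E2 = "(`) ((+) (n + 1)) ` path_E (m - 2)"
  interpret H: vertex_join "cycle_V n" "cycle_E n" ?V2 ?E2 "n + 1" n "n + 2"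
    using assms by (rule cp_vertex_join)
  have H: "cp_V n m = H.V" "cp_E n m = H.E"
    using assms(2) by (simp_all add: cp_V_eq cp_E_eq)
  have v_H: "v_graph TYPE('k) (cp_V n m) (cp_E n m) = v_comb H.V H.E"
    unfolding H by (rule v_graph_eq_v_comb[OF H.finite_join H.graph_on_join])
  have v_C: "v_graph TYPE('k) (cycle_V n) (cycle_E n) = v_comb (cycle_V n) (cycle_E n)"
    using H.finite1 H.graph1 by (rule v_graph_eq_v_comb)
  have fin_P: "finite (path_V (m - 2))"
    by (simp add: path_V_def)
  have "v_graph TYPE('k) (path_V (m - 2)) (path_E (m - 2)) = v_comb (path_V (m - 2)) (path_E (m - 2))"
    using fin_P graph_on_path by (rule v_graph_eq_v_comb)
  also have "\<dots> = v_comb ?V2 ?E2"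
    using graph_iso_image[OF graph_on_path, of "(+) (n + 1)"]
    by (intro v_comb_graph_iso[OF fin_P graph_on_path H.graph2, symmetric]) simp
  finally have v_P: "v_graph TYPE('k) (path_V (m - 2)) (path_E (m - 2)) = v_comb ?V2 ?E2" .
  obtain A1 where "v_witness (cycle_V n) (cycle_E n) A1" "card A1 = v_comb (cycle_V n) (cycle_E n)" "n \<in> A1"
    using cycle_min_witness_containing_last[OF assms(1)] .
  then show ?thesis
    using H.v_comb_join_le H.v_comb_join_ge unfolding v_H v_C v_P by fastforce
qed

end
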